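(* Let $n\in\mathbb{N}$, $m\in\mathbb{N}_0$, and suppose $L_n^{(m)}$ has a rational root $\bar x$. Then $\bar x\in\mathbb{N}$. Moreover, if $\bar x\in\mathbb{N}$ has prime factorization $\bar x=p_1^{n_1}\cdots p_k^{n_k}$, then $L_n^{(m)}(\bar x)=0$ is possible only if $n=p_1^{l_1}\cdots p_k^{l_k}$ for some $l_1,\dots,l_k\in\mathbb{N}_0$.
   Context: Generalized Laguerre polynomials: $L_n^{(\alpha)}(x)=\sum_{j=0}^n(-1)^j\binom{n+\alpha}{n-j}\frac{x^j}{j!}$. *)

theory Defs
  imports "HOL-Computational_Algebra.Computational_Algebra"
begin

definition laguerre :: "nat \<Rightarrow> nat \<Rightarrow> rat poly" where
  "laguerre n \<alpha> = (\<Sum>j\<le>n. monom ((-1)^j * of_nat ((n + \<alpha>) choose (n - j)) / fact j) j)"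

end

theory Submission
  imports Defs
begin

text \<open>
  Up to the factor \<open>(-1)^n n!\<close>, \<open>L_n^(\<alpha>)\<close> is a monic integer polynomial whose
  \<open>j\<close>-th coefficient \<open>(-1)^(n-j) binom(n+\<alpha>, n-j) n!/j!\<close> is divisible by \<open>n\<close> for \<open>j < n\<close>.
  Hence a rational root is an algebraic integer and so an integer \<open>k\<close>; it is positive since all
  terms of \<open>L_n^(\<alpha>)(x)\<close> have the same sign for \<open>x \<le> 0\<close>. Evaluating the monic polynomial at
  \<open>k\<close> and reducing modulo \<open>n\<close> gives \<open>n dvd k^n\<close>, so every prime factor of \<open>n\<close> divides \<open>k\<close>.
\<close>

lemma dvd_lead_coeff_mult_root_power:
  fixes p :: "'a :: comm_ring_1 poly"
  assumes root: "poly p a = 0"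
    and dvd_coeff: "\<And>i. i < degree p \<Longrightarrow> d dvd coeff p i"
  shows "d dvd lead_coeff p * a ^ degree p"
proof -
  have "0 = (\<Sum>i\<le>degree p. coeff p i * a ^ i)"
    using root by (simp add: poly_altdef)
  also have "\<dots> = (\<Sum>i<degree p. coeff p i * a ^ i) + lead_coeff p * a ^ degree p"
    by (simp add: lessThan_Suc_atMost [symmetric])
  finally have "lead_coeff p * a ^ degree p = - (\<Sum>i<degree p. coeff p i * a ^ i)"
    by (simp add: eq_neg_iff_add_eq_0 add.commute)
  moreover have "d dvd (\<Sum>i<degree p. coeff p i * a ^ i)"
    by (intro dvd_sum dvd_mult2 dvd_coeff) simp
  ultimately show ?thesis
    by simp
qed

lemma prod_prime_factors_superset:
  fixes x :: "'a :: factorial_semiring_multiplicative"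
  assumes "x \<noteq> 0" and "finite A" and "\<And>p. p \<in> A \<Longrightarrow> prime p" and "prime_factors x \<subseteq> A"
  shows "(\<Prod>p\<in>A. p ^ multiplicity p x) = normalize x"
proof -
  have "(\<Prod>p\<in>A. p ^ multiplicity p x) = (\<Prod>p\<in>prime_factors x. p ^ multiplicity p x)"
    using assms
    by (intro prod.mono_neutral_right) (auto simp: in_prime_factors_iff not_dvd_imp_multiplicity_0)
  with assms(1) show ?thesis
    by (simp add: prod_prime_factors)
qed

lemma poly_map_poly_of_int: "poly (map_poly of_int p) (of_int a) = of_int (poly p a)"
  by (induction p) (simp_all add: map_poly_pCons)

lemma coeff_laguerre:
  "coeff (laguerre n \<alpha>) j =
     (if j \<le> n then (-1) ^ j * of_nat ((n + \<alpha>) choose (n - j)) / fact j else 0)"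
  by (simp add: laguerre_def coeff_sum)

lemma poly_laguerre_pos_if_nonpos:
  assumes "x \<le> 0"
  shows "poly (laguerre n \<alpha>) x > 0"
proof -
  have "poly (laguerre n \<alpha>) x = (\<Sum>j\<le>n. of_nat ((n + \<alpha>) choose (n - j)) / fact j * (- x) ^ j)"
    by (simp add: laguerre_def poly_sum poly_monom power_minus [of x] mult_ac)
  also have "\<dots> > 0"
    using assms by (intro sum_pos2 [of _ 0]) auto
  finally show ?thesis .
qed

definition monic_laguerre_int :: "nat \<Rightarrow> nat \<Rightarrow> int poly" where
  "monic_laguerre_int n \<alpha> =
     (\<Sum>j\<le>n. monom ((-1) ^ (n - j) * int (((n + \<alpha>) choose (n - j)) * (fact n div fact j))) j)"

lemma coeff_monic_laguerre_int:
  "coeff (monic_laguerre_int n \<alpha>) j =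
     (if j \<le> n then (-1) ^ (n - j) * int (((n + \<alpha>) choose (n - j)) * (fact n div fact j)) else 0)"
  by (simp add: monic_laguerre_int_def coeff_sum)

lemma map_poly_of_int_monic_laguerre_int:
  "map_poly of_int (monic_laguerre_int n \<alpha>) = smult ((-1) ^ n * fact n) (laguerre n \<alpha>)"
proof (rule poly_eqI)
  fix j
  have "of_nat (fact n div fact j) = (fact n / fact j :: rat)"
    and "(-1) ^ (n - j) = ((-1) ^ n * (-1) ^ j :: rat)" if "j \<le> n"
    using that by (simp_all add: of_nat_of_nat_div fact_dvd minus_one_power_iff)
  then show "coeff (map_poly of_int (monic_laguerre_int n \<alpha>)) j =
      coeff (smult ((-1) ^ n * fact n) (laguerre n \<alpha>)) j"
    by (simp add: coeff_map_poly coeff_monic_laguerre_int coeff_laguerre)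
qed

lemma degree_monic_laguerre_int: "degree (monic_laguerre_int n \<alpha>) = n"
proof (rule antisym)
  show "degree (monic_laguerre_int n \<alpha>) \<le> n"
    by (rule degree_le) (simp add: coeff_monic_laguerre_int)
  show "n \<le> degree (monic_laguerre_int n \<alpha>)"
    by (rule le_degree) (simp add: coeff_monic_laguerre_int)
qed

lemma lead_coeff_monic_laguerre_int: "lead_coeff (monic_laguerre_int n \<alpha>) = 1"
  by (simp add: degree_monic_laguerre_int coeff_monic_laguerre_int)

lemma dvd_coeff_monic_laguerre_int:
  assumes "j < n"
  shows "int n dvd coeff (monic_laguerre_int n \<alpha>) j"
proof -
  have "n dvd fact n div fact j"
    using assms by (simp add: fact_div_fact) (rule dvd_prodI; simp)
  with assms show ?thesis
    by (simp add: coeff_monic_laguerre_int)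
qed

lemma laguerre_root_is_pos_nat:
  assumes "poly (laguerre n \<alpha>) x = 0"
  shows "\<exists>k>0. x = of_nat k"
proof -
  have "poly (map_poly of_int (monic_laguerre_int n \<alpha>)) x = 0"
    using assms by (simp add: map_poly_of_int_monic_laguerre_int)
  then have "algebraic_int x"
    by (auto simp: algebraic_int_altdef_ipoly lead_coeff_monic_laguerre_int)
  then have "x \<in> \<int>"
    by (rule rational_algebraic_int_is_int) (simp add: Rats_def)
  then obtain a where a: "x = of_int a"
    by (elim Ints_cases)
  have "x > 0"
    using poly_laguerre_pos_if_nonpos [of x n \<alpha>] assms by force
  with a show ?thesis
    by (intro exI [of _ "nat a"]) simp
qed

lemma prime_factors_subset_laguerre_root:
  assumes root: "poly (laguerre n \<alpha>) (of_nat k) = 0"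
  shows "prime_factors n \<subseteq> prime_factors k"
proof
  fix p assume p: "p \<in> prime_factors n"
  have "of_int (poly (monic_laguerre_int n \<alpha>) (int k)) =
      (-1) ^ n * fact n * poly (laguerre n \<alpha>) (of_nat k)"
    by (simp flip: poly_map_poly_of_int add: map_poly_of_int_monic_laguerre_int)
  with root have "poly (monic_laguerre_int n \<alpha>) (int k) = 0"
    by simp
  then have "int n dvd int k ^ n"
    using dvd_lead_coeff_mult_root_power [OF _ dvd_coeff_monic_laguerre_int]
    by (metis degree_monic_laguerre_int lead_coeff_monic_laguerre_int mult_1)
  then have "int p dvd int k ^ n"
    using p by (auto simp: in_prime_factors_iff intro: dvd_trans)
  then have "p dvd k"
    using p by (simp add: in_prime_factors_iff prime_dvd_power_iff flip: of_nat_power)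
  moreover have "k \<noteq> 0"
    using poly_laguerre_pos_if_nonpos [of 0 n \<alpha>] root by (cases k) auto
  ultimately show "p \<in> prime_factors k"
    using p by (simp add: in_prime_factors_iff)
qed

theorem proposition5:
  fixes n m :: nat and x :: rat
  assumes "n \<ge> 1"
    and "poly (laguerre n m) x = 0"
  shows "\<exists>k::nat. k > 0 \<and> x = of_nat k \<and>
           (\<exists>l :: nat \<Rightarrow> nat. n = (\<Prod>p\<in>prime_factors k. p ^ l p))"
proof -
  obtain k where k: "k > 0" "x = of_nat k"
    using laguerre_root_is_pos_nat [OF assms(2)] by blast
  have "prime_factors n \<subseteq> prime_factors k"
    using assms(2) k(2) by (intro prime_factors_subset_laguerre_root) simp
  then have "n = (\<Prod>p\<in>prime_factors k. p ^ multiplicity p n)"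
    using assms(1) by (subst prod_prime_factors_superset) auto
  with k show ?thesis
    by metis
qed

end
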